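(* Let $(V,f)$ be a non-degenerate cubic space of finite residual rank $r$, and fix $v_1,\dots,v_r\in V$ such that $\overline{q}(v_1),\dots,\overline{q}(v_r)$ form a basis of $\overline{Q}$. Given a good table $T$ (with respect to these $v_i$), there is a good table $T'\supset T$ obtained by adding an entry to the final row $u_1,\dots,u_m$.
   Context: $k$ is algebraically closed of characteristic different from $2,3$. For $V$ with basis and dual coordinates $x_i$, $P_n(V)$ is the space of formal, possibly infinite, $k$-linear combinations of degree-$n$ monomials in the $x_i$. The strength of a homogeneous $h\in P_n(V)$, $n\ge1$, is the least $s$ with $h=\sum_{i=1}^s a_ib_i$, $a_i,b_i$ homogeneous of positive degree less than $n$ ($\infty$ if none); $(V,f)$ is non-degenerate if $f$ has infinite strength. $\overline{P}_2(V)$ is $P_2(V)$ modulo the subspace of finite-strength quadratic forms. For $v\in V$, $f_v=\partial_vf\in P_2(V)$ is the directional derivative (in coordinates $\partial_{v_i}f=\partial f/\partial x_i$) and $\overline{q}(v)$ is its image in $\overline{P}_2(V)$; $\overline{Q}=\overline{q}(V)$, and the residual rank of $f$ is $\dim\overline{Q}$. $\langle-,-,-\rangle_f$ is the symmetric trilinear form with $\langle v,v,v\rangle_f=f(v)$; then $f_v(w)=3\langle v,w,w\rangle_f$. A good table (with respect to $v_1,\dots,v_r$) is a finite table with rows $v_i\mid w_{i,1},\dots,w_{i,n_i}$ for $1\le i\le r$ and a final row $u_1,\dots,u_m$ (with $n_i,m\ge0$), entries in $V$, such that: (a) the entries are linearly independent; (b) $\langle v_i,w_{i,j},w_{i,j}\rangle_f=1$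 and $\langle u_i,u_i,u_i\rangle_f=1$ for all indices, and whenever $x,y,z$ are entries with $\langle x,y,z\rangle_f\ne0$ then, up to permutation, either $x=v_i,\ y=z=w_{i,j}$, or $x=y=z=u_i$, or $x,y,z\in\{v_1,\dots,v_r\}$; (c) for every entry $a$ other than $v_1,\dots,v_r$, the quadratic form $f_a$ has finite strength. *)

theory Defs
  imports "HOL-Library.Multiset" "HOL-Computational_Algebra.Polynomial"
begin

text \<open>The vector space V has a basis indexed by the type 'i; an element of V is a
finitely supported coefficient function 'i => 'k.  A formal power series in the dual
coordinates x_i is a function from monomials (multisets over 'i) to coefficients;
P_n(V) consists of those supported on monomials of degree n.\<close>

type_synonym ('i,'k) series = "'i multiset \<Rightarrow> 'k"

definition alg_closed_field :: "'k::field itself \<Rightarrow> bool" where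
  "alg_closed_field _ \<longleftrightarrow> (\<forall>p::'k poly. degree p > 0 \<longrightarrow> (\<exists>x. poly p x = 0))"

definition inV :: "('i \<Rightarrow> 'k::zero) \<Rightarrow> bool" where
  "inV x \<longleftrightarrow> finite {i. x i \<noteq> 0}"

definition homog :: "nat \<Rightarrow> ('i,'k::zero) series \<Rightarrow> bool" where
  "homog d h \<longleftrightarrow> (\<forall>M. size M \<noteq> d \<longrightarrow> h M = 0)"

text \<open>Product of formal power series (Cauchy product on monomials).\<close>
definition smult_series :: "('i,'k::comm_ring_1) series \<Rightarrow> ('i,'k) series \<Rightarrow> ('i,'k) series" where
  "smult_series a b = (\<lambda>M. \<Sum>N\<in>{N. N \<subseteq># M}. a N * b (M - N))"

definition finite_strength :: "nat \<Rightarrow> ('i,'k::comm_ring_1) series \<Rightarrow> bool" where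
  "finite_strength n h \<longleftrightarrow>
     (\<exists>(s::nat) (a::nat \<Rightarrow> ('i,'k) series) (b::nat \<Rightarrow> ('i,'k) series). (\<forall>i<s. \<exists>d e. 0 < d \<and> d < n \<and> 0 < e \<and> e < n \<and> homog d (a i) \<and> homog e (b i))
        \<and> h = (\<lambda>M. \<Sum>i<s. smult_series (a i) (b i) M))"

text \<open>Directional derivative: (d_v h) = sum_i v_i * dh/dx_i.\<close>
definition dderiv :: "('i \<Rightarrow> 'k::comm_ring_1) \<Rightarrow> ('i,'k) series \<Rightarrow> ('i,'k) series" where
  "dderiv v h = (\<lambda>M. \<Sum>i\<in>{i. v i \<noteq> 0}. v i * of_nat (count M i + 1) * h (add_mset i M))"

text \<open>Symmetric trilinear form with <v,v,v>_f = f(v) (for cubic f).\<close>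
definition trilin :: "('i,'k::field) series \<Rightarrow> ('i \<Rightarrow> 'k) \<Rightarrow> ('i \<Rightarrow> 'k) \<Rightarrow> ('i \<Rightarrow> 'k) \<Rightarrow> 'k" where
  "trilin f x y z = dderiv x (dderiv y (dderiv z f)) {#} / 6"

definition lin_indep_list :: "('i \<Rightarrow> 'k::field) list \<Rightarrow> bool" where
  "lin_indep_list xs \<longleftrightarrow>
     (\<forall>c. (\<forall>i. (\<Sum>k<length xs. c k * (xs ! k) i) = 0) \<longrightarrow> (\<forall>k<length xs. c k = 0))"

text \<open>Rows: v_i | w i 0, ..., w i (n i - 1) for i < r; final row u 0, ..., u (m - 1).\<close>
definition table_entries ::
  "(nat \<Rightarrow> 'i \<Rightarrow> 'k) \<Rightarrow> nat \<Rightarrow> (nat \<Rightarrow> nat) \<Rightarrow> (nat \<Rightarrow> nat \<Rightarrow> 'i \<Rightarrow> 'k) \<Rightarrow> (nat \<Rightarrow> 'i \<Rightarrow> 'k) \<Rightarrow> nat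
    \<Rightarrow> ('i \<Rightarrow> 'k) list" where
  "table_entries v r n w u m =
     concat (map (\<lambda>i. v i # map (w i) [0..<n i]) [0..<r]) @ map u [0..<m]"

definition perm3_of :: "'a \<Rightarrow> 'a \<Rightarrow> 'a \<Rightarrow> 'a \<Rightarrow> 'a \<Rightarrow> bool" where
  "perm3_of x y z a b \<longleftrightarrow>
     (x = a \<and> y = b \<and> z = b) \<or> (x = b \<and> y = a \<and> z = b) \<or> (x = b \<and> y = b \<and> z = a)"

definition good_table ::
  "('i,'k::field) series \<Rightarrow> (nat \<Rightarrow> 'i \<Rightarrow> 'k) \<Rightarrow> nat \<Rightarrow> (nat \<Rightarrow> nat) \<Rightarrow> (nat \<Rightarrow> nat \<Rightarrow> 'i \<Rightarrow> 'k)
    \<Rightarrow> (nat \<Rightarrow> 'i \<Rightarrow> 'k) \<Rightarrow> nat \<Rightarrow> bool" where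
  "good_table f v r n w u m \<longleftrightarrow>
     (let E = set (table_entries v r n w u m) in
      (\<forall>x\<in>E. inV x)
    \<and> lin_indep_list (table_entries v r n w u m)
    \<and> (\<forall>i<r. \<forall>j<n i. trilin f (v i) (w i j) (w i j) = 1)
    \<and> (\<forall>j<m. trilin f (u j) (u j) (u j) = 1)
    \<and> (\<forall>x\<in>E. \<forall>y\<in>E. \<forall>z\<in>E. trilin f x y z \<noteq> 0 \<longrightarrow>
          (\<exists>i<r. \<exists>j<n i. perm3_of x y z (v i) (w i j))
        \<or> (\<exists>j<m. x = u j \<and> y = u j \<and> z = u j)
        \<or> (x \<in> v ` {..<r} \<and> y \<in> v ` {..<r} \<and> z \<in> v ` {..<r}))
    \<and> (\<forall>i<r. \<forall>j<n i. finite_strength 2 (dderiv (w i j) f))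
    \<and> (\<forall>j<m. finite_strength 2 (dderiv (u j) f)))"

end

theory Submission
  imports Defs
begin

text \<open>Let E be the set of entries. A new entry x needs f(x) = 1, f_x of finite strength,
  \<langle>x,a,b\<rangle> = 0 for a, b \<in> E and \<langle>x,x,a\<rangle> = 0 for a \<in> E. Except for f(x) = 1 and
  \<langle>x,x,v_j\<rangle> = 0 these conditions cut out a subspace of finite codimension: f_x has finite
  strength iff the coordinates of q(x) in the basis q(v_j) vanish, and for an entry a other
  than the v_j, writing f_a = \<Sum> l_k m_k with linear l_k, m_k, the form \<langle>a,x,-\<rangle> vanishes as
  soon as all l_k(x), m_k(x) do. A cubic vanishing on a subspace of finite codimension has
  finite strength (project away one linear condition at a time), so f does not vanish there;
  repeating inside the kernels of the f_z found so far gives z_0, ..., z_r in the subspace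
  with f(z_k) \<noteq> 0 and \<langle>z_k,z_l,-\<rangle> = 0 for k \<noteq> l. Solving \<Sum> s_k \<langle>z_k,z_k,v_j\<rangle> = 0
  (j < r) nontrivially and taking t_k = \<plusminus>\<surd>s_k with \<Sum> t_k^3 f(z_k) \<noteq> 0, a cube-root
  rescaling of \<Sum> t_k z_k is the new entry.\<close>

lemma inV_add: "inV x \<Longrightarrow> inV y \<Longrightarrow> inV (\<lambda>i. x i + y i :: 'k::monoid_add)"
  unfolding inV_def by (rule finite_subset[of _ "{i. x i \<noteq> 0} \<union> {i. y i \<noteq> 0}"]) auto

lemma inV_scale: "inV x \<Longrightarrow> inV (\<lambda>i. t * x i :: 'k::mult_zero)"
  unfolding inV_def by (rule finite_subset[of _ "{i. x i \<noteq> 0}"]) auto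

lemma inV_zero: "inV (\<lambda>i. 0)"
  unfolding inV_def by simp

lemma inV_sum:
  "finite A \<Longrightarrow> (\<And>k. k \<in> A \<Longrightarrow> inV (z k)) \<Longrightarrow> inV (\<lambda>i. \<Sum>k\<in>A. c k * z k i :: 'k::comm_semiring_0)"
  by (induction A rule: finite_induct) (simp_all add: inV_zero inV_add inV_scale)

definition unit_vec :: "'i \<Rightarrow> 'i \<Rightarrow> 'k::zero_neq_one" where
  "unit_vec i = (\<lambda>j. if j = i then 1 else 0)"

lemma inV_unit_vec: "inV (unit_vec i)"
  unfolding inV_def unit_vec_def by simp

lemma inV_unit_vec_expansion:
  assumes "inV (x :: 'i \<Rightarrow> 'k::comm_semiring_1)"
  shows "x = (\<lambda>j. \<Sum>i\<in>{i. x i \<noteq> 0}. x i * unit_vec i j)"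
proof
  fix j
  have "(\<Sum>i\<in>{i. x i \<noteq> 0}. x i * unit_vec i j) = (\<Sum>i\<in>{i. x i \<noteq> 0}. if i = j then x i else 0)"
    by (rule sum.cong) (auto simp: unit_vec_def)
  also have "\<dots> = x j"
    using assms unfolding inV_def by (simp add: sum.delta)
  finally show "x j = (\<Sum>i\<in>{i. x i \<noteq> 0}. x i * unit_vec i j)" ..
qed

lemma dderiv_superset:
  assumes "finite S" "{i. v i \<noteq> 0} \<subseteq> S"
  shows "dderiv v h M = (\<Sum>i\<in>S. v i * of_nat (count M i + 1) * h (add_mset i M))"
  unfolding dderiv_def by (rule sum.mono_neutral_left) (use assms in auto)

lemma dderiv_add_dir:
  assumes "inV x" "inV y"
  shows "dderiv (\<lambda>i. x i + y i) h = (\<lambda>M. dderiv x h M + dderiv y h M)"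
proof
  fix M
  have S: "finite ({i. x i \<noteq> 0} \<union> {i. y i \<noteq> 0})" using assms unfolding inV_def by auto
  show "dderiv (\<lambda>i. x i + y i) h M = dderiv x h M + dderiv y h M"
    by (subst (1 2 3) dderiv_superset[OF S]) (auto simp: distrib_right sum.distrib)
qed

lemma dderiv_scale_dir:
  assumes "inV x"
  shows "dderiv (\<lambda>i. t * x i) h = (\<lambda>M. t * dderiv x h M)"
proof
  fix M
  have S: "finite {i. x i \<noteq> 0}" using assms unfolding inV_def .
  show "dderiv (\<lambda>i. t * x i) h M = t * dderiv x h M"
    by (subst (1 2) dderiv_superset[OF S]) (auto simp: sum_distrib_left mult.assoc)
qed

lemma dderiv_add: "dderiv v (\<lambda>M. a M + b M) = (\<lambda>M. dderiv v a M + dderiv v b M)"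
  unfolding dderiv_def by (simp add: distrib_left sum.distrib)

lemma dderiv_diff: "dderiv v (\<lambda>M. a M - b M) = (\<lambda>M. dderiv v a M - dderiv v b M)"
  unfolding dderiv_def by (simp add: right_diff_distrib sum_subtractf)

lemma dderiv_cmult: "dderiv v (\<lambda>M. t * a M) = (\<lambda>M. t * dderiv v a M)"
  unfolding dderiv_def by (simp add: sum_distrib_left mult_ac)

lemma dderiv_sum: "dderiv v (\<lambda>M. \<Sum>k\<in>A. F k M) = (\<lambda>M. \<Sum>k\<in>A. dderiv v (F k) M)"
  unfolding dderiv_def by (simp add: sum_distrib_left sum.swap[of _ A])

lemma dderiv_zero: "dderiv v (\<lambda>M. 0) = (\<lambda>M. 0)"
  unfolding dderiv_def by simp

lemma dderiv_unit_vec: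
  fixes h :: "('i,'k::comm_ring_1) series"
  shows "dderiv (unit_vec i) h M = of_nat (count M i + 1) * h (add_mset i M)"
proof -
  have "{j. unit_vec i j \<noteq> (0::'k)} = {i}" unfolding unit_vec_def by auto
  then show ?thesis unfolding dderiv_def by (simp add: unit_vec_def)
qed

lemma dderiv_commute:
  assumes "inV x" "inV y"
  shows "dderiv x (dderiv y h) = dderiv y (dderiv x h)"
proof
  fix M
  have "dderiv x (dderiv y h) M = (\<Sum>i\<in>{i. x i \<noteq> 0}. \<Sum>j\<in>{j. y j \<noteq> 0}.
      x i * of_nat (count M i + 1) * (y j * of_nat (count (add_mset i M) j + 1) * h (add_mset j (add_mset i M))))"
    unfolding dderiv_def by (simp add: sum_distrib_left)
  also have "\<dots> = (\<Sum>j\<in>{j. y j \<noteq> 0}. \<Sum>i\<in>{i. x i \<noteq> 0}.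
      y j * of_nat (count M j + 1) * (x i * of_nat (count (add_mset j M) i + 1) * h (add_mset i (add_mset j M))))"
    by (subst sum.swap, intro sum.cong refl) (auto simp: mult_ac add_mset_commute)
  also have "\<dots> = dderiv y (dderiv x h) M"
    unfolding dderiv_def by (simp add: sum_distrib_left)
  finally show "dderiv x (dderiv y h) M = dderiv y (dderiv x h) M" .
qed

lemma trilin_swap12: "inV x \<Longrightarrow> inV y \<Longrightarrow> trilin f x y z = trilin f y x z"
  unfolding trilin_def by (simp add: dderiv_commute)

lemma trilin_swap23: "inV y \<Longrightarrow> inV z \<Longrightarrow> trilin f x y z = trilin f x z y"
  unfolding trilin_def by (simp add: dderiv_commute)

lemma trilin_add1: "inV x \<Longrightarrow> inV x' \<Longrightarrow> trilin f (\<lambda>i. x i + x' i) y z = trilin f x y z + trilin f x' y z"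
  unfolding trilin_def by (simp add: dderiv_add_dir add_divide_distrib)

lemma trilin_add2: "inV y \<Longrightarrow> inV y' \<Longrightarrow> trilin f x (\<lambda>i. y i + y' i) z = trilin f x y z + trilin f x y' z"
  unfolding trilin_def by (simp add: dderiv_add_dir dderiv_add add_divide_distrib)

lemma trilin_add3: "inV z \<Longrightarrow> inV z' \<Longrightarrow> trilin f x y (\<lambda>i. z i + z' i) = trilin f x y z + trilin f x y z'"
  unfolding trilin_def by (simp add: dderiv_add_dir dderiv_add add_divide_distrib)

lemma trilin_scale1: "inV x \<Longrightarrow> trilin f (\<lambda>i. t * x i) y z = t * trilin f x y z"
  unfolding trilin_def by (simp add: dderiv_scale_dir)

lemma trilin_scale2: "inV y \<Longrightarrow> trilin f x (\<lambda>i. t * y i) z = t * trilin f x y z"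
  unfolding trilin_def by (simp add: dderiv_scale_dir dderiv_cmult)

lemma trilin_scale3: "inV z \<Longrightarrow> trilin f x y (\<lambda>i. t * z i) = t * trilin f x y z"
  unfolding trilin_def by (simp add: dderiv_scale_dir dderiv_cmult)

lemma trilin_sum1:
  assumes "finite A" "\<And>k. k \<in> A \<Longrightarrow> inV (z k)"
  shows "trilin f (\<lambda>i. \<Sum>k\<in>A. c k * z k i) y w = (\<Sum>k\<in>A. c k * trilin f (z k) y w)"
  using assms
proof (induction A rule: finite_induct)
  case empty
  then show ?case by (simp add: trilin_def dderiv_def)
next
  case (insert a A)
  then show ?case
    by (simp add: trilin_add1 trilin_scale1 inV_scale inV_sum)
qed

lemma trilin_cube_add:
  assumes "inV a" "inV b"
  shows "trilin f (\<lambda>i. a i + b i) (\<lambda>i. a i + b i) (\<lambda>i. a i + b i)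
     = trilin f a a a + 3 * trilin f a a b + 3 * trilin f a b b + trilin f b b b"
proof -
  have "trilin f a b a = trilin f a a b" "trilin f b a a = trilin f a a b"
    "trilin f b a b = trilin f a b b" "trilin f b b a = trilin f a b b"
    using assms by (metis trilin_swap12 trilin_swap23)+
  then show ?thesis
    using assms by (simp add: trilin_add1 trilin_add2 trilin_add3 inV_add)
qed

lemma trilin_polarization:
  assumes x: "inV x" and y: "inV y" and z: "inV z"
  shows "6 * trilin f x y z = trilin f (\<lambda>i. x i + y i + z i) (\<lambda>i. x i + y i + z i) (\<lambda>i. x i + y i + z i)
     - trilin f (\<lambda>i. x i + y i) (\<lambda>i. x i + y i) (\<lambda>i. x i + y i)
     - trilin f (\<lambda>i. x i + z i) (\<lambda>i. x i + z i) (\<lambda>i. x i + z i)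
     - trilin f (\<lambda>i. y i + z i) (\<lambda>i. y i + z i) (\<lambda>i. y i + z i)
     + trilin f x x x + trilin f y y y + trilin f z z z"
proof -
  have xy: "inV (\<lambda>i. x i + y i)" using x y by (rule inV_add)
  have "trilin f y x z = trilin f x y z"
    using x y by (rule trilin_swap12[symmetric])
  then have "trilin f (\<lambda>i. x i + y i + z i) (\<lambda>i. x i + y i + z i) (\<lambda>i. x i + y i + z i)
     = trilin f (\<lambda>i. x i + y i) (\<lambda>i. x i + y i) (\<lambda>i. x i + y i)
       + 3 * (trilin f x x z + 2 * trilin f x y z + trilin f y y z)
       + 3 * (trilin f x z z + trilin f y z z) + trilin f z z z"
    using trilin_cube_add[OF xy z, of f] x y by (simp add: trilin_add1 trilin_add2)
  then show ?thesis
    unfolding trilin_cube_add[OF x z] trilin_cube_add[OF y z] by (simp add: algebra_simps)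
qed

lemma finite_submultisets: "finite {N. N \<subseteq># (M::'a multiset)}"
proof -
  have "{N. N \<subseteq># M} \<subseteq> (\<Union>n\<in>{0..size M}. multisets_of_size (set_mset M) n)"
    by (auto simp: multisets_of_size_def dest: mset_subset_eqD size_mset_mono)
  then show ?thesis by (rule finite_subset) auto
qed

lemma sum_submultisets_containing:
  "(\<Sum>N\<in>{N. N \<subseteq># add_mset i M}. if i \<in># N then F N else 0) = (\<Sum>N\<in>{N. N \<subseteq># M}. F (add_mset i N))"
proof -
  have "{N \<in> {N. N \<subseteq># add_mset i M}. i \<in># N} = add_mset i ` {N. N \<subseteq># M}"
  proof (intro equalityI subsetI)
    fix N assume "N \<in> {N \<in> {N. N \<subseteq># add_mset i M}. i \<in># N}"
    then have "N = add_mset i (N - {#i#})" "N - {#i#} \<subseteq># M"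
      by (auto simp: subset_eq_diff_conv)
    then show "N \<in> add_mset i ` {N. N \<subseteq># M}" by blast
  qed auto
  then show ?thesis
    by (simp add: sum.inter_filter[OF finite_submultisets, symmetric] sum.reindex inj_on_def)
qed

lemma sum_submultisets_count_le:
  "(\<Sum>N\<in>{N. N \<subseteq># add_mset i M}. if count N i \<le> count M i then F N else 0) = (\<Sum>N\<in>{N. N \<subseteq># M}. F N)"
proof -
  have "{N \<in> {N. N \<subseteq># add_mset i M}. count N i \<le> count M i} = {N. N \<subseteq># M}"
    by (auto simp: subseteq_mset_def) (metis le_SucI)
  then show ?thesis
    by (simp add: sum.inter_filter[OF finite_submultisets, symmetric])
qed

lemma count_submultiset_add_mset_split:
  assumes "N \<subseteq># add_mset i M"
  shows "(if i \<in># N then of_nat (count N i) else 0)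
    + (if count N i \<le> count M i then of_nat (count M i + 1 - count N i) else 0)
    = (of_nat (count M i + 1) :: 'a::semiring_1)"
proof -
  have "count N i \<le> count M i + 1"
    using assms by (metis count_add_mset mset_subset_eq_count Suc_eq_plus1)
  then consider "count N i = 0" | "0 < count N i" "count N i \<le> count M i"
    | "count N i = count M i + 1"
    by linarith
  then show ?thesis
    by cases (simp_all add: not_in_iff flip: of_nat_add)
qed

text \<open>The Leibniz rule for the partial derivative in the direction of the basis vector i,
  on coefficients: the submultisets of M + i are split according to whether they contain i.\<close>

lemma smult_series_add_mset:
  fixes a b :: "('i,'k::comm_ring_1) series"
  shows "of_nat (count M i + 1) * smult_series a b (add_mset i M)
   = (\<Sum>N\<in>{N. N \<subseteq># M}. of_nat (count N i + 1) * a (add_mset i N) * b (M - N))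
   + (\<Sum>N\<in>{N. N \<subseteq># M}. of_nat (count (M - N) i + 1) * a N * b (add_mset i (M - N)))"
proof -
  let ?P = "{N. N \<subseteq># add_mset i M}"
  let ?X = "\<lambda>N. a N * b (add_mset i M - N)"
  have first: "(\<Sum>N\<in>{N. N \<subseteq># M}. of_nat (count N i + 1) * a (add_mset i N) * b (M - N))
      = (\<Sum>N\<in>?P. if i \<in># N then of_nat (count N i) * ?X N else 0)"
    by (simp add: sum_submultisets_containing mult.assoc)
  have "(\<Sum>N\<in>{N. N \<subseteq># M}. of_nat (count (M - N) i + 1) * a N * b (add_mset i (M - N)))
      = (\<Sum>N\<in>{N. N \<subseteq># M}. of_nat (count M i + 1 - count N i) * ?X N)"
  proof (rule sum.cong[OF refl])
    fix N assume "N \<in> {N. N \<subseteq># M}"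
    then have "N \<subseteq># M" by simp
    then have "count (M - N) i + 1 = count M i + 1 - count N i"
      "add_mset i (M - N) = add_mset i M - N"
      by (simp_all add: mset_subset_eq_count Suc_diff_le)
        (metis add_mset_add_single subset_mset.diff_add_assoc2)
    then show "of_nat (count (M - N) i + 1) * a N * b (add_mset i (M - N))
      = of_nat (count M i + 1 - count N i) * ?X N"
      by (simp only: mult.assoc)
  qed
  then have second: "(\<Sum>N\<in>{N. N \<subseteq># M}. of_nat (count (M - N) i + 1) * a N * b (add_mset i (M - N)))
      = (\<Sum>N\<in>?P. if count N i \<le> count M i then of_nat (count M i + 1 - count N i) * ?X N else 0)"
    by (simp only: sum_submultisets_count_le)
  have "(if i \<in># N then of_nat (count N i) * ?X N else 0)
      + (if count N i \<le> count M i then of_nat (count M i + 1 - count N i) * ?X N else 0)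
      = of_nat (count M i + 1) * ?X N" if "N \<in> ?P" for N
    using count_submultiset_add_mset_split[of N i M, where 'a = 'k] that
    by (cases "i \<in># N"; cases "count N i \<le> count M i") (simp_all add: distrib_right[symmetric])
  then show ?thesis
    unfolding first second sum.distrib[symmetric] smult_series_def
    by (simp add: sum_distrib_left)
qed

lemma dderiv_smult_series:
  fixes a b :: "('i,'k::comm_ring_1) series"
  shows "dderiv v (smult_series a b) = (\<lambda>M. smult_series (dderiv v a) b M + smult_series a (dderiv v b) M)"
proof
  fix M
  let ?S = "{i. v i \<noteq> 0}"
  have "dderiv v (smult_series a b) M
      = (\<Sum>i\<in>?S. v i * (of_nat (count M i + 1) * smult_series a b (add_mset i M)))"
    unfolding dderiv_def by (simp add: mult.assoc)
  also have "\<dots> = (\<Sum>N\<in>{N. N \<subseteq># M}. (\<Sum>i\<in>?S. v i * of_nat (count N i + 1) * a (add_mset i N)) * b (M - N))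
     + (\<Sum>N\<in>{N. N \<subseteq># M}. a N * (\<Sum>i\<in>?S. v i * of_nat (count (M - N) i + 1) * b (add_mset i (M - N))))"
    unfolding smult_series_add_mset
    by (simp add: distrib_left sum.distrib sum_distrib_left sum_distrib_right sum.swap[of _ ?S] mult_ac)
  also have "\<dots> = smult_series (dderiv v a) b M + smult_series a (dderiv v b) M"
    unfolding dderiv_def smult_series_def by simp
  finally show "dderiv v (smult_series a b) M = smult_series (dderiv v a) b M + smult_series a (dderiv v b) M" .
qed

lemma homog_dderiv: "homog (Suc d) h \<Longrightarrow> homog d (dderiv v h)"
  unfolding homog_def dderiv_def by auto

lemma homog_0_dderiv: "homog 0 h \<Longrightarrow> dderiv v h = (\<lambda>M. 0)"
  unfolding homog_def dderiv_def by auto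

lemma homog_at_empty: "homog d h \<Longrightarrow> 0 < d \<Longrightarrow> h {#} = 0"
  unfolding homog_def by auto

lemma homog_add: "homog d a \<Longrightarrow> homog d b \<Longrightarrow> homog d (\<lambda>M. a M + b M :: 'k::monoid_add)"
  unfolding homog_def by auto

lemma homog_diff: "homog d a \<Longrightarrow> homog d b \<Longrightarrow> homog d (\<lambda>M. a M - b M :: 'k::group_add)"
  unfolding homog_def by auto

lemma homog_cmult: "homog d a \<Longrightarrow> homog d (\<lambda>M. t * a M :: 'k::mult_zero)"
  unfolding homog_def by auto

lemma homog_smult_series:
  fixes a b :: "('i,'k::comm_ring_1) series"
  assumes "homog d a" "homog e b"
  shows "homog (d + e) (smult_series a b)"
  unfolding homog_def smult_series_def
proof (intro allI impI sum.neutral ballI)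
  fix M N :: "'i multiset"
  assume "size M \<noteq> d + e" "N \<in> {N. N \<subseteq># M}"
  then have "size N \<noteq> d \<or> size (M - N) \<noteq> e"
    by (auto simp: size_Diff_submset size_mset_mono)
  then show "a N * b (M - N) = 0" using assms unfolding homog_def by auto
qed

lemma smult_series_at_empty: "smult_series a b {#} = a {#} * b {#}"
proof -
  have "{N. N \<subseteq># ({#}::'i multiset)} = {{#}}" by auto
  then show ?thesis unfolding smult_series_def by simp
qed

lemma dderiv2_smult_series_linear:
  fixes l m :: "('i,'k::comm_ring_1) series"
  assumes "homog 1 l" "homog 1 m"
  shows "dderiv x (dderiv y (smult_series l m)) {#}
     = dderiv y l {#} * dderiv x m {#} + dderiv x l {#} * dderiv y m {#}"
proof -
  have "homog 0 (dderiv y l)" "homog 0 (dderiv x m)"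
    using assms homog_dderiv[of 0] by auto
  then show ?thesis
    using homog_at_empty[OF assms(1)] homog_at_empty[OF assms(2)]
    by (simp add: dderiv_smult_series dderiv_add smult_series_at_empty homog_0_dderiv mult_ac)
qed

lemma dderiv3_smult_series_linear_quadratic:
  fixes a b :: "('i,'k::comm_ring_1) series"
  assumes "homog 1 a" "homog 2 b"
  shows "dderiv z (dderiv z (dderiv z (smult_series a b))) {#}
     = 3 * dderiv z a {#} * dderiv z (dderiv z b) {#}"
proof -
  have h1: "homog 1 (dderiv z b)" using assms homog_dderiv[of 1] by (simp add: numeral_2_eq_2)
  have "homog 0 (dderiv z a)" "homog 0 (dderiv z (dderiv z b))"
    using assms(1) h1 homog_dderiv[of 0] by auto
  then show ?thesis
    using homog_at_empty[OF assms(1)] homog_at_empty[OF assms(2)] homog_at_empty[OF h1]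
    by (simp add: dderiv_smult_series dderiv_add smult_series_at_empty homog_0_dderiv dderiv_zero
        dderiv_cmult algebra_simps)
qed

lemma size_3_multiset:
  assumes "size M = 3"
  obtains i j k where "M = add_mset k (add_mset j {#i#})"
proof -
  from assms obtain k M1 where "M = add_mset k M1" "size M1 = 2"
    by (metis Suc_eq_numeral Suc_numeral semiring_norm(5) size_add_mset size_eq_Suc_imp_eq_union)
  moreover from \<open>size M1 = 2\<close> obtain j M2 where "M1 = add_mset j M2" "size M2 = 1"
    by (metis Suc_1 Suc_inject size_add_mset size_eq_Suc_imp_eq_union)
  moreover from \<open>size M2 = 1\<close> obtain i where "M2 = {#i#}"
    by (metis size_1_singleton_mset)
  ultimately show ?thesis using that by blast
qed

lemma cubic_eq_0_if_diagonal_eq_0: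
  fixes g :: "('i,'k::field) series"
  assumes two: "(2::'k) \<noteq> 0" and three: "(3::'k) \<noteq> 0"
    and "homog 3 g" and diag: "\<And>z. inV z \<Longrightarrow> trilin g z z z = 0"
  shows "g = (\<lambda>M. 0)"
proof
  fix M :: "'i multiset"
  show "g M = 0"
  proof (cases "size M = 3")
    case False
    then show ?thesis using \<open>homog 3 g\<close> unfolding homog_def by auto
  next
    case True
    then obtain i j k where M: "M = add_mset k (add_mset j {#i#})" by (rule size_3_multiset)
    have six: "(6::'k) \<noteq> 0"
      using two three mult_eq_0_iff[of "2::'k" 3] by simp
    have "6 * trilin g (unit_vec i) (unit_vec j) (unit_vec k) = 0"
      by (simp add: trilin_polarization inV_unit_vec inV_add diag)
    moreover have "trilin g (unit_vec i) (unit_vec j) (unit_vec k)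
        = of_nat (count {#i#} j + 1) * of_nat (count (add_mset j {#i#}) k + 1) * g M / 6"
      unfolding trilin_def by (simp add: dderiv_unit_vec M add_mset_commute mult_ac)
    moreover have "of_nat (count {#i#} j + 1) \<noteq> (0::'k)"
      using two by (cases "i = j") auto
    moreover have "of_nat (count (add_mset j {#i#}) k + 1) \<noteq> (0::'k)"
      using two three by (cases "i = k"; cases "j = k") (auto simp: numeral_3_eq_3[symmetric])
    ultimately show ?thesis using six by auto
  qed
qed

lemma finite_strength_zero: "finite_strength n (\<lambda>M. 0)"
  unfolding finite_strength_def by (rule exI[of _ 0]) auto

lemma finite_strength_smult_series:
  assumes "0 < d" "d < n" "0 < e" "e < n" "homog d a" "homog e b"
  shows "finite_strength n (smult_series a b)"
  unfolding finite_strength_def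
  by (rule exI[of _ 1], rule exI[of _ "\<lambda>_. a"], rule exI[of _ "\<lambda>_. b"]) (use assms in auto)

lemma sum_lessThan_add: "(\<Sum>i<m + (n::nat). f i) = (\<Sum>i<m. f i) + (\<Sum>i<n. f (m + i))"
  by (induction n) (auto simp: add_ac)

lemma finite_strength_add:
  fixes a b :: "('i,'k::comm_ring_1) series"
  assumes "finite_strength n a" "finite_strength n b"
  shows "finite_strength n (\<lambda>M. a M + b M)"
proof -
  let ?ok = "\<lambda>a b. \<exists>d e. 0 < d \<and> d < n \<and> 0 < e \<and> e < n \<and> homog d a \<and> homog e b"
  obtain s1 :: nat and a1 b1 where 1: "\<forall>i<s1. ?ok (a1 i) (b1 i)" "a = (\<lambda>M. \<Sum>i<s1. smult_series (a1 i) (b1 i) M)"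
    using assms(1) unfolding finite_strength_def by (elim exE conjE) (rule that)
  obtain s2 :: nat and a2 b2 where 2: "\<forall>i<s2. ?ok (a2 i) (b2 i)" "b = (\<lambda>M. \<Sum>i<s2. smult_series (a2 i) (b2 i) M)"
    using assms(2) unfolding finite_strength_def by (elim exE conjE) (rule that)
  define A where "A = (\<lambda>i. if i < s1 then a1 i else a2 (i - s1))"
  define B where "B = (\<lambda>i. if i < s1 then b1 i else b2 (i - s1))"
  have "\<forall>i<s1 + s2. ?ok (A i) (B i)"
  proof (intro allI impI)
    fix i assume "i < s1 + s2"
    then show "?ok (A i) (B i)"
      using 1(1) 2(1) unfolding A_def B_def by (cases "i < s1") auto
  qed
  moreover have "(\<lambda>M. a M + b M) = (\<lambda>M. \<Sum>i<s1 + s2. smult_series (A i) (B i) M)"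
    unfolding 1(2) 2(2) A_def B_def by (simp add: sum_lessThan_add)
  ultimately show ?thesis
    unfolding finite_strength_def by (intro exI conjI)
qed

lemma finite_strength_cmult:
  fixes a :: "('i,'k::comm_ring_1) series"
  assumes "finite_strength n a"
  shows "finite_strength n (\<lambda>M. t * a M)"
proof -
  obtain s :: nat and a1 b1 where
    1: "\<forall>i<s. \<exists>d e. 0 < d \<and> d < n \<and> 0 < e \<and> e < n \<and> homog d (a1 i) \<and> homog e (b1 i)"
       "a = (\<lambda>M. \<Sum>i<s. smult_series (a1 i) (b1 i) M)"
    using assms unfolding finite_strength_def by (elim exE conjE) (rule that)
  have "smult_series (\<lambda>M. t * a1 i M) (b1 i) M = t * smult_series (a1 i) (b1 i) M" for i M
    unfolding smult_series_def by (simp add: sum_distrib_left mult_ac)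
  then have "(\<lambda>M. t * a M) = (\<lambda>M. \<Sum>i<s. smult_series (\<lambda>M. t * a1 i M) (b1 i) M)"
    unfolding 1(2) by (simp add: sum_distrib_left)
  moreover have "\<forall>i<s. \<exists>d e. 0 < d \<and> d < n \<and> 0 < e \<and> e < n \<and> homog d (\<lambda>M. t * a1 i M) \<and> homog e (b1 i)"
    using 1(1) homog_cmult by blast
  ultimately show ?thesis
    unfolding finite_strength_def by (intro exI conjI)
qed

lemma finite_strength_diff:
  fixes a b :: "('i,'k::comm_ring_1) series"
  assumes "finite_strength n a" "finite_strength n b"
  shows "finite_strength n (\<lambda>M. a M - b M)"
  using finite_strength_add[OF assms(1) finite_strength_cmult[OF assms(2), of "-1"]] by simp

definition linear_functional :: "(('i \<Rightarrow> 'k::comm_ring_1) \<Rightarrow> 'k) \<Rightarrow> bool" where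
  "linear_functional \<phi> \<longleftrightarrow>
     (\<forall>x y. inV x \<longrightarrow> inV y \<longrightarrow> \<phi> (\<lambda>i. x i + y i) = \<phi> x + \<phi> y)
     \<and> (\<forall>t x. inV x \<longrightarrow> \<phi> (\<lambda>i. t * x i) = t * \<phi> x)"

lemma linear_functional_add:
  "linear_functional \<phi> \<Longrightarrow> inV x \<Longrightarrow> inV y \<Longrightarrow> \<phi> (\<lambda>i. x i + y i) = \<phi> x + \<phi> y"
  unfolding linear_functional_def by blast

lemma linear_functional_scale:
  "linear_functional \<phi> \<Longrightarrow> inV x \<Longrightarrow> \<phi> (\<lambda>i. t * x i) = t * \<phi> x"
  unfolding linear_functional_def by blast

lemma linear_functional_sum:
  assumes "linear_functional \<phi>" "finite A" "\<And>k. k \<in> A \<Longrightarrow> inV (z k)"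
  shows "\<phi> (\<lambda>i. \<Sum>k\<in>A. c k * z k i) = (\<Sum>k\<in>A. c k * \<phi> (z k))"
  using assms(2,3)
proof (induction A rule: finite_induct)
  case empty
  then show ?case
    using linear_functional_scale[OF assms(1) inV_zero, of 0] by simp
next
  case (insert a A)
  then show ?case
    by (simp add: linear_functional_add[OF assms(1)] linear_functional_scale[OF assms(1)]
        inV_scale inV_sum)
qed

lemma linear_functional_trilin: "linear_functional (\<lambda>x. trilin f x a b)"
  unfolding linear_functional_def by (simp add: trilin_add1 trilin_scale1)

lemma linear_functional_dderiv_at_empty: "linear_functional (\<lambda>x. dderiv x h {#})"
  unfolding linear_functional_def by (simp add: dderiv_add_dir dderiv_scale_dir)

definition common_kernel :: "(('i \<Rightarrow> 'k::zero) \<Rightarrow> 'k) list \<Rightarrow> ('i \<Rightarrow> 'k) set" where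
  "common_kernel \<Phi> = {z. inV z \<and> (\<forall>\<phi>\<in>set \<Phi>. \<phi> z = 0)}"

lemma common_kernel_append: "common_kernel (\<Phi> @ \<Psi>) = common_kernel \<Phi> \<inter> common_kernel \<Psi>"
  unfolding common_kernel_def by auto

lemma common_kernel_Cons: "common_kernel (\<phi> # \<Phi>) = {z \<in> common_kernel \<Phi>. \<phi> z = 0}"
  unfolding common_kernel_def by auto

lemma common_kernel_lincomb:
  assumes "\<forall>\<phi>\<in>set \<Phi>. linear_functional \<phi>" "finite A" "\<forall>k\<in>A. z k \<in> common_kernel \<Phi>"
  shows "(\<lambda>i. \<Sum>k\<in>A. c k * z k i) \<in> common_kernel \<Phi>"
  using assms unfolding common_kernel_def
  by (simp add: inV_sum linear_functional_sum) (metis (no_types, lifting) mult_zero_right sum.neutral)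

lemma common_kernel_add:
  assumes "\<forall>\<phi>\<in>set \<Phi>. linear_functional \<phi>" "x \<in> common_kernel \<Phi>" "y \<in> common_kernel \<Phi>"
  shows "(\<lambda>i. x i + y i) \<in> common_kernel \<Phi>"
  using assms unfolding common_kernel_def by (auto simp: inV_add linear_functional_add)

lemma common_kernel_scale:
  assumes "\<forall>\<phi>\<in>set \<Phi>. linear_functional \<phi>" "z \<in> common_kernel \<Phi>"
  shows "(\<lambda>i. t * z i) \<in> common_kernel \<Phi>"
  using assms unfolding common_kernel_def by (auto simp: inV_scale linear_functional_scale)

text \<open>The element \<Sum> \<phi>(e_i) x_i of P_1(V); on a singleton multiset SOME picks its element.\<close>

definition linear_series :: "(('i \<Rightarrow> 'k::comm_ring_1) \<Rightarrow> 'k) \<Rightarrow> ('i,'k) series" where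
  "linear_series \<phi> = (\<lambda>M. if size M = 1 then \<phi> (unit_vec (SOME i. i \<in># M)) else 0)"

lemma homog_linear_series: "homog 1 (linear_series \<phi>)"
  unfolding homog_def linear_series_def by auto

lemma dderiv_linear_series:
  assumes "linear_functional \<phi>" "inV x"
  shows "dderiv x (linear_series \<phi>) {#} = \<phi> x"
proof -
  have "dderiv x (linear_series \<phi>) {#} = (\<Sum>i\<in>{i. x i \<noteq> 0}. x i * \<phi> (unit_vec i))"
    unfolding dderiv_def linear_series_def by simp
  also have "\<dots> = \<phi> (\<lambda>j. \<Sum>i\<in>{i. x i \<noteq> 0}. x i * unit_vec i j)"
    using assms(1) by (rule linear_functional_sum[symmetric])
      (use assms(2) inV_unit_vec in \<open>auto simp: inV_def\<close>)
  also have "\<dots> = \<phi> x"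
    using inV_unit_vec_expansion[OF assms(2)] by simp
  finally show ?thesis .
qed

lemma trilin_cube_diff_scaled:
  assumes "inV z" "inV p"
  shows "trilin g (\<lambda>i. z i - t * p i) (\<lambda>i. z i - t * p i) (\<lambda>i. z i - t * p i)
    = trilin g z z z - 3 * t * trilin g z z p + 3 * t\<^sup>2 * trilin g z p p - t ^ 3 * trilin g p p p"
proof -
  have w: "(\<lambda>i. z i - t * p i) = (\<lambda>i. z i + (- t) * p i)" by simp
  show ?thesis
    unfolding w trilin_cube_add[OF assms(1) inV_scale[OF assms(2)]]
      trilin_scale1[OF assms(2)] trilin_scale2[OF assms(2)] trilin_scale3[OF assms(2)]
    by (simp add: power2_eq_square power3_eq_cube algebra_simps)
qed

lemma trilin_diff_smult_series_linear_quadratic: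
  fixes g :: "('i,'k::field) series"
  assumes "(3::'k) \<noteq> 0" "homog 1 l" "homog 2 R"
  shows "trilin (\<lambda>M. g M - smult_series l R M) z z z
    = trilin g z z z - dderiv z l {#} * dderiv z (dderiv z R) {#} / 2"
proof -
  have "trilin (\<lambda>M. g M - smult_series l R M) z z z
      = trilin g z z z - 3 * dderiv z l {#} * dderiv z (dderiv z R) {#} / 6"
    unfolding trilin_def dderiv_diff dderiv3_smult_series_linear_quadratic[OF assms(2,3)]
    by (simp add: diff_divide_distrib)
  also have "3 * dderiv z l {#} * dderiv z (dderiv z R) {#} / 6 = dderiv z l {#} * dderiv z (dderiv z R) {#} / 2"
    using nonzero_mult_divide_mult_cancel_left[OF assms(1),
        of "dderiv z l {#} * dderiv z (dderiv z R) {#}" 2]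
    by (simp add: mult.assoc)
  finally show ?thesis .
qed

text \<open>Subtracting a multiple of the linear form of \<phi> turns g into its pull-back under the
  projection z \<mapsto> z - \<phi>(z) p; the quadratic cofactor R collects the terms of the Taylor
  expansion of g around z in the direction p that involve \<phi>(z).\<close>

lemma cubic_projection_cofactor:
  fixes g :: "('i,'k::field) series"
  assumes two: "(2::'k) \<noteq> 0" and three: "(3::'k) \<noteq> 0" and g: "homog 3 g"
    and \<phi>: "linear_functional \<phi>" and p: "inV p" "\<phi> p = 1"
  obtains R where "homog 2 R"
    "\<And>z. inV z \<Longrightarrow> trilin (\<lambda>M. g M - smult_series (linear_series \<phi>) R M) z z z
        = trilin g (\<lambda>i. z i - \<phi> z * p i) (\<lambda>i. z i - \<phi> z * p i) (\<lambda>i. z i - \<phi> z * p i)"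
proof
  let ?l = "linear_series \<phi>"
  define L where "L = dderiv p (dderiv p g)"
  define C where "C = trilin g p p p"
  define R where "R = (\<lambda>M. dderiv p g M - 1/2 * smult_series ?l L M + C * smult_series ?l ?l M)"
  have g2: "homog 2 (dderiv p g)"
    using g homog_dderiv[of 2] by (simp add: numeral_3_eq_3 numeral_2_eq_2)
  have L1: "homog 1 L"
    unfolding L_def using g2 homog_dderiv[of 1] by (simp add: numeral_2_eq_2)
  have "homog 2 (smult_series ?l L)" "homog 2 (smult_series ?l ?l)"
    using homog_smult_series[OF homog_linear_series L1, of \<phi>]
      homog_smult_series[OF homog_linear_series homog_linear_series, of \<phi> \<phi>]
    unfolding one_add_one .
  then show R2: "homog 2 R"
    unfolding R_def using g2 by (intro homog_add homog_diff homog_cmult)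
  fix z :: "'i \<Rightarrow> 'k" assume z: "inV z"
  define t where "t = \<phi> z"
  have six: "(6::'k) \<noteq> 0"
    using two three mult_eq_0_iff[of "2::'k" 3] by simp
  have lz: "dderiv z ?l {#} = t"
    unfolding t_def using \<phi> z by (rule dderiv_linear_series)
  have "dderiv z (dderiv z (smult_series ?l L)) {#} = 2 * t * dderiv z L {#}"
    by (simp add: dderiv2_smult_series_linear[OF homog_linear_series L1] lz)
  moreover have "dderiv z L {#} = 6 * trilin g z p p"
    unfolding L_def trilin_def using six by simp
  moreover have "dderiv z (dderiv z (smult_series ?l ?l)) {#} = 2 * t\<^sup>2"
    by (simp add: dderiv2_smult_series_linear[OF homog_linear_series homog_linear_series] lz
        power2_eq_square)
  moreover have "dderiv z (dderiv z (dderiv p g)) {#} = 6 * trilin g z z p"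
    unfolding trilin_def using six by simp
  ultimately have "dderiv z (dderiv z R) {#} = 6 * trilin g z z p - 6 * t * trilin g z p p + 2 * C * t\<^sup>2"
    unfolding R_def dderiv_add dderiv_diff dderiv_cmult using two by (simp add: algebra_simps)
  then have "trilin (\<lambda>M. g M - smult_series ?l R M) z z z
      = trilin g z z z - t * (6 * trilin g z z p - 6 * t * trilin g z p p + 2 * C * t\<^sup>2) / 2"
    using trilin_diff_smult_series_linear_quadratic[OF three homog_linear_series R2] lz by simp
  also have "\<dots> = trilin g z z z - 3 * t * trilin g z z p + 3 * t\<^sup>2 * trilin g z p p - t ^ 3 * C"
    using two by (simp add: field_simps power2_eq_square power3_eq_cube)
  finally show "trilin (\<lambda>M. g M - smult_series ?l R M) z z z
      = trilin g (\<lambda>i. z i - \<phi> z * p i) (\<lambda>i. z i - \<phi> z * p i) (\<lambda>i. z i - \<phi> z * p i)"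
    unfolding trilin_cube_diff_scaled[OF z p(1)] C_def t_def .
qed

lemma cubic_projection_along:
  fixes g :: "('i,'k::field) series"
  assumes "(2::'k) \<noteq> 0" "(3::'k) \<noteq> 0" "homog 3 g"
    and "linear_functional \<phi>" "inV p" "\<phi> p = 1"
  obtains g' where "homog 3 g'" "finite_strength 3 g' \<Longrightarrow> finite_strength 3 g"
    "\<And>z. inV z \<Longrightarrow> trilin g' z z z
        = trilin g (\<lambda>i. z i - \<phi> z * p i) (\<lambda>i. z i - \<phi> z * p i) (\<lambda>i. z i - \<phi> z * p i)"
proof -
  obtain R where R: "homog 2 R" and
    "\<And>z. inV z \<Longrightarrow> trilin (\<lambda>M. g M - smult_series (linear_series \<phi>) R M) z z z
        = trilin g (\<lambda>i. z i - \<phi> z * p i) (\<lambda>i. z i - \<phi> z * p i) (\<lambda>i. z i - \<phi> z * p i)"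
    using cubic_projection_cofactor[OF assms] by blast
  moreover have "homog 3 (\<lambda>M. g M - smult_series (linear_series \<phi>) R M)"
    using \<open>homog 3 g\<close> homog_smult_series[OF homog_linear_series R, of \<phi>]
    by (intro homog_diff) (simp_all add: numeral_3_eq_3)
  moreover have "finite_strength 3 (smult_series (linear_series \<phi>) R)"
    using homog_linear_series R by (rule finite_strength_smult_series[rotated 4]) simp_all
  then have "finite_strength 3 g"
    if "finite_strength 3 (\<lambda>M. g M - smult_series (linear_series \<phi>) R M)"
    using finite_strength_add[OF that] by fastforce
  ultimately show ?thesis using that by blast
qed

lemma common_kernel_Cons_projection:
  assumes \<phi>: "linear_functional \<phi>" and \<Phi>: "\<forall>\<psi>\<in>set \<Phi>. linear_functional \<psi>"
    and p: "p \<in> common_kernel \<Phi>" "\<phi> p = 1" and z: "z \<in> common_kernel \<Phi>"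
  shows "(\<lambda>i. z i - \<phi> z * p i) \<in> common_kernel (\<phi> # \<Phi>)"
proof -
  have w: "(\<lambda>i. z i - \<phi> z * p i) = (\<lambda>i. z i + (- \<phi> z) * p i)" by simp
  have "inV z" "inV p" using z p(1) by (simp_all add: common_kernel_def)
  then have "\<phi> (\<lambda>i. z i + (- \<phi> z) * p i) = 0"
    unfolding linear_functional_add[OF \<phi> \<open>inV z\<close> inV_scale[OF \<open>inV p\<close>]]
      linear_functional_scale[OF \<phi> \<open>inV p\<close>] \<open>\<phi> p = 1\<close> by simp
  moreover have "(\<lambda>i. z i + (- \<phi> z) * p i) \<in> common_kernel \<Phi>"
    by (rule common_kernel_add[OF \<Phi> z common_kernel_scale[OF \<Phi> p(1)]])
  ultimately show ?thesis
    unfolding w common_kernel_Cons by blast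
qed

lemma finite_strength_if_vanishes_on_common_kernel:
  fixes g :: "('i,'k::field) series"
  assumes two: "(2::'k) \<noteq> 0" and three: "(3::'k) \<noteq> 0"
    and "homog 3 g" "\<forall>\<phi>\<in>set \<Phi>. linear_functional \<phi>"
    and "\<forall>z\<in>common_kernel \<Phi>. trilin g z z z = 0"
  shows "finite_strength 3 g"
  using assms(3-)
proof (induction \<Phi> arbitrary: g)
  case Nil
  then have "g = (\<lambda>M. 0)"
    by (intro cubic_eq_0_if_diagonal_eq_0[OF two three]) (auto simp: common_kernel_def)
  then show ?case by (simp add: finite_strength_zero)
next
  case (Cons \<phi> \<Phi>)
  then have \<phi>: "linear_functional \<phi>" and \<Phi>: "\<forall>\<psi>\<in>set \<Phi>. linear_functional \<psi>" by auto
  show ?case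
  proof (cases "\<forall>z\<in>common_kernel \<Phi>. \<phi> z = 0")
    case True
    then show ?thesis using Cons by (simp add: common_kernel_Cons)
  next
    case False
    then obtain p0 where p0: "p0 \<in> common_kernel \<Phi>" "\<phi> p0 \<noteq> 0" by blast
    define p where "p = (\<lambda>i. inverse (\<phi> p0) * p0 i)"
    have p: "p \<in> common_kernel \<Phi>" "\<phi> p = 1"
      unfolding p_def using common_kernel_scale[OF \<Phi> p0(1)] p0
      by (auto simp: linear_functional_scale[OF \<phi>] common_kernel_def)
    obtain g' where "homog 3 g'" "finite_strength 3 g' \<Longrightarrow> finite_strength 3 g" and
      proj: "\<And>z. inV z \<Longrightarrow> trilin g' z z z
        = trilin g (\<lambda>i. z i - \<phi> z * p i) (\<lambda>i. z i - \<phi> z * p i) (\<lambda>i. z i - \<phi> z * p i)"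
      using cubic_projection_along[OF two three \<open>homog 3 g\<close> \<phi> _ p(2)] p(1)
      by (auto simp: common_kernel_def)
    moreover have "\<forall>z\<in>common_kernel \<Phi>. trilin g' z z z = 0"
      using Cons.prems(3) proj common_kernel_Cons_projection[OF \<phi> \<Phi> p]
      by (simp add: common_kernel_def)
    ultimately show ?thesis
      using Cons.IH \<Phi> by blast
  qed
qed

definition residual_basis :: "('i,'k::field) series \<Rightarrow> (nat \<Rightarrow> 'i \<Rightarrow> 'k) \<Rightarrow> nat \<Rightarrow> bool" where
  "residual_basis f v r \<longleftrightarrow>
     (\<forall>c. finite_strength 2 (\<lambda>M. \<Sum>j<r. c j * dderiv (v j) f M) \<longrightarrow> (\<forall>j<r. c j = 0))
     \<and> (\<forall>x. inV x \<longrightarrow> (\<exists>c. finite_strength 2 (\<lambda>M. dderiv x f M - (\<Sum>j<r. c j * dderiv (v j) f M))))"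

definition residual_coords :: "('i,'k::field) series \<Rightarrow> (nat \<Rightarrow> 'i \<Rightarrow> 'k) \<Rightarrow> nat \<Rightarrow> ('i \<Rightarrow> 'k) \<Rightarrow> nat \<Rightarrow> 'k" where
  "residual_coords f v r x = (SOME c. finite_strength 2 (\<lambda>M. dderiv x f M - (\<Sum>j<r. c j * dderiv (v j) f M)))"

lemma residual_coords:
  assumes "residual_basis f v r" "inV x"
  shows "finite_strength 2 (\<lambda>M. dderiv x f M - (\<Sum>j<r. residual_coords f v r x j * dderiv (v j) f M))"
proof -
  obtain c where "finite_strength 2 (\<lambda>M. dderiv x f M - (\<Sum>j<r. c j * dderiv (v j) f M))"
    using assms unfolding residual_basis_def by blast
  then show ?thesis
    unfolding residual_coords_def
    by (rule someI[where P = "\<lambda>c. finite_strength 2 (\<lambda>M. dderiv x f M - (\<Sum>j<r. c j * dderiv (v j) f M))"])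
qed

lemma residual_coords_unique:
  assumes "residual_basis f v r"
    and "finite_strength 2 (\<lambda>M. D M - (\<Sum>j<r. c j * dderiv (v j) f M))"
    and "finite_strength 2 (\<lambda>M. D M - (\<Sum>j<r. c' j * dderiv (v j) f M))"
    and "j < r"
  shows "c j = c' j"
proof -
  have "(\<lambda>M. (D M - (\<Sum>j<r. c' j * dderiv (v j) f M)) - (D M - (\<Sum>j<r. c j * dderiv (v j) f M)))
      = (\<lambda>M. \<Sum>j<r. (c j - c' j) * dderiv (v j) f M)"
    by (simp add: left_diff_distrib sum_subtractf)
  then have "finite_strength 2 (\<lambda>M. \<Sum>j<r. (c j - c' j) * dderiv (v j) f M)"
    using finite_strength_diff[OF assms(3,2)] by simp
  then show ?thesis
    using assms(1,4) unfolding residual_basis_def by auto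
qed

lemma linear_functional_residual_coord:
  fixes f :: "('i,'k::field) series"
  assumes basis: "residual_basis f v r" and "j < r"
  shows "linear_functional (\<lambda>x. residual_coords f v r x j)"
  unfolding linear_functional_def
proof (intro conjI allI impI)
  let ?c = "residual_coords f v r"
  fix x y :: "'i \<Rightarrow> 'k" assume x: "inV x" and y: "inV y"
  have "(\<lambda>M. (dderiv x f M - (\<Sum>j<r. ?c x j * dderiv (v j) f M))
          + (dderiv y f M - (\<Sum>j<r. ?c y j * dderiv (v j) f M)))
      = (\<lambda>M. dderiv (\<lambda>i. x i + y i) f M - (\<Sum>j<r. (?c x j + ?c y j) * dderiv (v j) f M))"
    by (simp add: dderiv_add_dir[OF x y] distrib_right sum.distrib algebra_simps)
  then have "finite_strength 2
      (\<lambda>M. dderiv (\<lambda>i. x i + y i) f M - (\<Sum>j<r. (?c x j + ?c y j) * dderiv (v j) f M))"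
    using finite_strength_add[OF residual_coords[OF basis x] residual_coords[OF basis y]] by simp
  from residual_coords_unique[OF basis residual_coords[OF basis inV_add[OF x y]] this \<open>j < r\<close>]
  show "?c (\<lambda>i. x i + y i) j = ?c x j + ?c y j" .
next
  let ?c = "residual_coords f v r"
  fix t and x :: "'i \<Rightarrow> 'k" assume x: "inV x"
  have "(\<lambda>M. t * (dderiv x f M - (\<Sum>j<r. ?c x j * dderiv (v j) f M)))
      = (\<lambda>M. dderiv (\<lambda>i. t * x i) f M - (\<Sum>j<r. (t * ?c x j) * dderiv (v j) f M))"
    by (simp add: dderiv_scale_dir[OF x] right_diff_distrib sum_distrib_left mult_ac)
  then have "finite_strength 2 (\<lambda>M. dderiv (\<lambda>i. t * x i) f M - (\<Sum>j<r. (t * ?c x j) * dderiv (v j) f M))"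
    using finite_strength_cmult[OF residual_coords[OF basis x], of t] by simp
  from residual_coords_unique[OF basis residual_coords[OF basis inV_scale[OF x]] this \<open>j < r\<close>]
  show "?c (\<lambda>i. t * x i) j = t * ?c x j" .
qed

lemma finite_strength_if_residual_coords_eq_0:
  assumes "residual_basis f v r" "inV z" "\<forall>j<r. residual_coords f v r z j = 0"
  shows "finite_strength 2 (dderiv z f)"
  using residual_coords[OF assms(1,2)] assms(3) by simp

lemma kernel_functionals_of_finite_strength_derivative:
  fixes f :: "('i,'k::field) series"
  assumes a: "inV a" and fs: "finite_strength 2 (dderiv a f)"
  shows "\<exists>\<Psi>. (\<forall>\<psi>\<in>set \<Psi>. linear_functional \<psi>)
    \<and> (\<forall>x\<in>common_kernel \<Psi>. \<forall>y. inV y \<longrightarrow> trilin f a x y = 0)"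
proof -
  obtain s :: nat and l m where lm: "\<forall>i<s. \<exists>d e. 0 < d \<and> d < 2 \<and> 0 < e \<and> e < 2 \<and> homog d (l i) \<and> homog e (m i)"
    and fa: "dderiv a f = (\<lambda>M. \<Sum>i<s. smult_series (l i) (m i) M)"
    using fs unfolding finite_strength_def by (elim exE conjE) (rule that)
  have hl: "homog 1 (l i)" and hm: "homog 1 (m i)" if "i < s" for i
    using lm that by (metis One_nat_def less_2_cases_iff not_less_zero)+
  define \<Psi> where "\<Psi> = map (\<lambda>i x. dderiv x (l i) {#}) [0..<s] @ map (\<lambda>i x. dderiv x (m i) {#}) [0..<s]"
  have "trilin f a x y = 0" if x: "x \<in> common_kernel \<Psi>" and y: "inV y" for x y
  proof -
    have "inV x" and lx: "\<And>i. i < s \<Longrightarrow> dderiv x (l i) {#} = 0" and mx: "\<And>i. i < s \<Longrightarrow> dderiv x (m i) {#} = 0"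
      using x unfolding common_kernel_def \<Psi>_def by auto
    then have "trilin f a x y = (\<Sum>i<s. dderiv x (dderiv y (smult_series (l i) (m i))) {#}) / 6"
      unfolding trilin_def using a y by (simp add: dderiv_commute[of a] fa dderiv_sum)
    also have "\<dots> = 0"
      by (simp add: dderiv2_smult_series_linear[OF hl hm] lx mx)
    finally show ?thesis .
  qed
  moreover have "\<forall>\<psi>\<in>set \<Psi>. linear_functional \<psi>"
    unfolding \<Psi>_def using linear_functional_dderiv_at_empty by auto
  ultimately show ?thesis by blast
qed

lemma kernel_functionals_of_finite_strength_derivatives:
  fixes f :: "('i,'k::field) series"
  assumes "\<forall>a\<in>set as. inV a \<and> finite_strength 2 (dderiv a f)"
  shows "\<exists>\<Psi>. (\<forall>\<psi>\<in>set \<Psi>. linear_functional \<psi>)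
    \<and> (\<forall>x\<in>common_kernel \<Psi>. \<forall>a\<in>set as. \<forall>y. inV y \<longrightarrow> trilin f a x y = 0)"
  using assms
proof (induction as)
  case Nil
  show ?case by (rule exI[of _ "[]"]) simp
next
  case (Cons a as)
  then obtain \<Psi> where "\<forall>\<psi>\<in>set \<Psi>. linear_functional \<psi>"
    "\<forall>x\<in>common_kernel \<Psi>. \<forall>a\<in>set as. \<forall>y. inV y \<longrightarrow> trilin f a x y = 0" by auto
  moreover obtain \<Psi>' where "\<forall>\<psi>\<in>set \<Psi>'. linear_functional \<psi>"
    "\<forall>x\<in>common_kernel \<Psi>'. \<forall>y. inV y \<longrightarrow> trilin f a x y = 0"
    using kernel_functionals_of_finite_strength_derivative[of a f] Cons.prems by auto
  ultimately show ?case
    by (intro exI[of _ "\<Psi>' @ \<Psi>"]) (auto simp: common_kernel_append)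
qed

definition trilin_orthogonal :: "('i,'k::field) series \<Rightarrow> (nat \<Rightarrow> 'i \<Rightarrow> 'k) \<Rightarrow> nat set \<Rightarrow> bool" where
  "trilin_orthogonal f Z S \<longleftrightarrow> (\<forall>k\<in>S. \<forall>l\<in>S. l \<noteq> k \<longrightarrow> (\<forall>y. inV y \<longrightarrow> trilin f (Z l) (Z k) y = 0))"

lemma exists_trilin_orthogonal_family:
  fixes f :: "('i,'k::field) series"
  assumes two: "(2::'k) \<noteq> 0" and three: "(3::'k) \<noteq> 0"
    and f: "homog 3 f" "\<not> finite_strength 3 f"
    and \<Phi>: "\<forall>\<phi>\<in>set \<Phi>. linear_functional \<phi>"
    and K: "\<forall>z\<in>common_kernel \<Phi>. finite_strength 2 (dderiv z f)"
  shows "\<exists>Z. (\<forall>k<N. Z k \<in> common_kernel \<Phi> \<and> trilin f (Z k) (Z k) (Z k) \<noteq> 0)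
    \<and> trilin_orthogonal f Z {..<N}"
proof (induction N)
  case 0
  show ?case by (simp add: trilin_orthogonal_def)
next
  case (Suc N)
  then obtain Z where Z: "\<forall>k<N. Z k \<in> common_kernel \<Phi> \<and> trilin f (Z k) (Z k) (Z k) \<noteq> 0"
    and orth: "trilin_orthogonal f Z {..<N}" by blast
  have "\<forall>a\<in>set (map Z [0..<N]). inV a \<and> finite_strength 2 (dderiv a f)"
    using Z K by (auto simp: common_kernel_def)
  then obtain \<Psi> where \<Psi>: "\<forall>\<psi>\<in>set \<Psi>. linear_functional \<psi>"
    and Z_\<Psi>: "\<forall>x\<in>common_kernel \<Psi>. \<forall>a\<in>set (map Z [0..<N]). \<forall>y. inV y \<longrightarrow> trilin f a x y = 0"
    using kernel_functionals_of_finite_strength_derivatives by blast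
  have "\<exists>z\<in>common_kernel (\<Phi> @ \<Psi>). trilin f z z z \<noteq> 0"
    using finite_strength_if_vanishes_on_common_kernel[OF two three f(1), of "\<Phi> @ \<Psi>"] f(2) \<Phi> \<Psi> by auto
  then obtain z where z: "z \<in> common_kernel \<Phi>" "z \<in> common_kernel \<Psi>" "trilin f z z z \<noteq> 0"
    by (auto simp: common_kernel_append)
  have "trilin f (Z l) z y = 0" "trilin f z (Z l) y = 0" if "l < N" "inV y" for l y
    using Z_\<Psi> z that trilin_swap12[of z "Z l"] Z by (auto simp: common_kernel_def)
  then show ?case
    using Z z orth
    by (intro exI[of _ "Z(N := z)"]) (auto simp: trilin_orthogonal_def less_Suc_eq)
qed

lemma trilin_orthogonal_lincomb:
  assumes "finite S" "\<forall>k\<in>S. inV (Z k)" "trilin_orthogonal f Z S" "k \<in> S" "inV y"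
  shows "trilin f (\<lambda>i. \<Sum>l\<in>S. t l * Z l i) (Z k) y = t k * trilin f (Z k) (Z k) y"
proof -
  have "trilin f (\<lambda>i. \<Sum>l\<in>S. t l * Z l i) (Z k) y = (\<Sum>l\<in>S. t l * trilin f (Z l) (Z k) y)"
    using assms(1,2) by (intro trilin_sum1) auto
  also have "\<dots> = t k * trilin f (Z k) (Z k) y + (\<Sum>l\<in>S - {k}. t l * trilin f (Z l) (Z k) y)"
    using assms(1,4) by (rule sum.remove)
  also have "(\<Sum>l\<in>S - {k}. t l * trilin f (Z l) (Z k) y) = 0"
    using assms(3-5) unfolding trilin_orthogonal_def by (intro sum.neutral) auto
  finally show ?thesis by simp
qed

lemma trilin_orthogonal_lincomb_square:
  assumes S: "finite S" "\<forall>k\<in>S. inV (Z k)" "trilin_orthogonal f Z S" and "inV y"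
  shows "trilin f (\<lambda>i. \<Sum>l\<in>S. t l * Z l i) (\<lambda>i. \<Sum>l\<in>S. t l * Z l i) y
    = (\<Sum>k\<in>S. t k * t k * trilin f (Z k) (Z k) y)"
proof -
  let ?x = "\<lambda>i. \<Sum>l\<in>S. t l * Z l i"
  have "inV ?x" using S by (intro inV_sum) auto
  have "trilin f ?x ?x y = (\<Sum>k\<in>S. t k * trilin f (Z k) ?x y)"
    using S by (intro trilin_sum1) auto
  also have "\<dots> = (\<Sum>k\<in>S. t k * (t k * trilin f (Z k) (Z k) y))"
  proof (rule sum.cong[OF refl])
    fix k assume "k \<in> S"
    then have "trilin f (Z k) ?x y = trilin f ?x (Z k) y"
      using S(2) \<open>inV ?x\<close> by (intro trilin_swap12) auto
    then show "t k * trilin f (Z k) ?x y = t k * (t k * trilin f (Z k) (Z k) y)"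
      using trilin_orthogonal_lincomb[OF S \<open>k \<in> S\<close> \<open>inV y\<close>] by simp
  qed
  finally show ?thesis by (simp add: mult.assoc)
qed

lemma trilin_orthogonal_lincomb_cube:
  assumes S: "finite S" "\<forall>k\<in>S. inV (Z k)" "trilin_orthogonal f Z S"
  shows "trilin f (\<lambda>i. \<Sum>l\<in>S. t l * Z l i) (\<lambda>i. \<Sum>l\<in>S. t l * Z l i) (\<lambda>i. \<Sum>l\<in>S. t l * Z l i)
    = (\<Sum>k\<in>S. t k * t k * t k * trilin f (Z k) (Z k) (Z k))"
proof -
  let ?x = "\<lambda>i. \<Sum>l\<in>S. t l * Z l i"
  have "inV ?x" using S by (intro inV_sum) auto
  then have "trilin f ?x ?x ?x = (\<Sum>k\<in>S. t k * t k * trilin f (Z k) (Z k) ?x)"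
    by (rule trilin_orthogonal_lincomb_square[OF S])
  also have "\<dots> = (\<Sum>k\<in>S. t k * t k * (t k * trilin f (Z k) (Z k) (Z k)))"
  proof (rule sum.cong[OF refl])
    fix k assume "k \<in> S"
    then have "trilin f (Z k) (Z k) ?x = trilin f (Z k) ?x (Z k)"
      using S(2) \<open>inV ?x\<close> by (intro trilin_swap23) auto
    also have "\<dots> = trilin f ?x (Z k) (Z k)"
      using S(2) \<open>inV ?x\<close> \<open>k \<in> S\<close> by (intro trilin_swap12) auto
    finally show "t k * t k * trilin f (Z k) (Z k) ?x = t k * t k * (t k * trilin f (Z k) (Z k) (Z k))"
      using trilin_orthogonal_lincomb[OF S \<open>k \<in> S\<close>] S(2) \<open>k \<in> S\<close> by simp
  qed
  finally show ?thesis by (simp add: mult.assoc)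
qed

lemma homogeneous_system_eliminate:
  fixes G :: "nat \<Rightarrow> nat \<Rightarrow> 'k::field"
  assumes S: "finite S" "k0 \<notin> S" and pivot: "G k0 m \<noteq> 0"
    and s: "\<forall>j<m. (\<Sum>k\<in>S. s k * (G k j - G k m / G k0 m * G k0 j)) = 0"
  shows "\<forall>j<Suc m. (\<Sum>k\<in>insert k0 S. (s(k0 := - (\<Sum>k\<in>S. s k * G k m) / G k0 m)) k * G k j) = 0"
proof (intro allI impI)
  fix j assume "j < Suc m"
  define a where "a = (\<Sum>k\<in>S. s k * G k m)"
  have "(\<Sum>k\<in>S. (s(k0 := - a / G k0 m)) k * G k j) = (\<Sum>k\<in>S. s k * G k j)"
    using S(2) by (intro sum.cong) auto
  then have "(\<Sum>k\<in>insert k0 S. (s(k0 := - a / G k0 m)) k * G k j)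
      = - a / G k0 m * G k0 j + (\<Sum>k\<in>S. s k * G k j)"
    using S by simp
  also have "(\<Sum>k\<in>S. s k * G k j) = a / G k0 m * G k0 j"
  proof (cases "j = m")
    case True
    then show ?thesis using pivot by (simp add: a_def)
  next
    case False
    then have "(\<Sum>k\<in>S. s k * G k j) = (\<Sum>k\<in>S. s k * G k m * (G k0 j / G k0 m))"
      using s \<open>j < Suc m\<close> by (simp add: algebra_simps sum_subtractf)
    then show ?thesis by (simp add: a_def sum_distrib_right sum_divide_distrib)
  qed
  finally show "(\<Sum>k\<in>insert k0 S. (s(k0 := - a / G k0 m)) k * G k j) = 0" by simp
qed

lemma homogeneous_system_nontrivial_solution:
  fixes G :: "nat \<Rightarrow> nat \<Rightarrow> 'k::field"
  assumes "finite S" "m < card S"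
  shows "\<exists>s. (\<exists>k\<in>S. s k \<noteq> 0) \<and> (\<forall>j<m. (\<Sum>k\<in>S. s k * G k j) = 0)"
  using assms
proof (induction m arbitrary: S G)
  case 0
  then have "S \<noteq> {}" by auto
  then show ?case by (intro exI[of _ "\<lambda>k. 1"]) auto
next
  case (Suc m)
  show ?case
  proof (cases "\<forall>k\<in>S. G k m = 0")
    case True
    obtain s where "\<exists>k\<in>S. s k \<noteq> 0" "\<forall>j<m. (\<Sum>k\<in>S. s k * G k j) = 0"
      using Suc.IH[of S G] Suc.prems by auto
    then show ?thesis
      using True by (intro exI[of _ s]) (auto simp: less_Suc_eq)
  next
    case False
    then obtain k0 where k0: "k0 \<in> S" "G k0 m \<noteq> 0" by blast
    then have S: "finite (S - {k0})" "m < card (S - {k0})"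
      using Suc.prems by (simp_all add: card_Diff_singleton)
    obtain s where s: "\<exists>k\<in>S - {k0}. s k \<noteq> 0"
      "\<forall>j<m. (\<Sum>k\<in>S - {k0}. s k * (G k j - G k m / G k0 m * G k0 j)) = 0"
      using Suc.IH[of "S - {k0}" "\<lambda>k j. G k j - G k m / G k0 m * G k0 j", OF S] by blast
    define s' where "s' = s(k0 := - (\<Sum>k\<in>S - {k0}. s k * G k m) / G k0 m)"
    have "insert k0 (S - {k0}) = S" using k0(1) by blast
    then have "\<forall>j<Suc m. (\<Sum>k\<in>S. s' k * G k j) = 0"
      using homogeneous_system_eliminate[OF S(1) _ k0(2) s(2)] unfolding s'_def by simp
    moreover have "\<exists>k\<in>S. s' k \<noteq> 0"
      using s(1) unfolding s'_def by auto
    ultimately show ?thesis by blast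
  qed
qed

lemma alg_closed_field_nth_root:
  assumes "alg_closed_field TYPE('k::field)" "0 < n"
  shows "\<exists>b::'k. b ^ n = a"
proof -
  have "degree ([:- a:] + monom 1 n) > 0"
    using assms(2) by (simp add: degree_add_eq_right degree_monom_eq)
  then obtain b where "poly ([:- a:] + monom 1 n) b = 0"
    using assms(1) unfolding alg_closed_field_def by blast
  then show ?thesis by (auto simp: poly_monom)
qed

text \<open>Square roots are determined only up to sign; flipping the sign of one of them changes the
  sum of cubes by twice that term, so one of the two choices gives a nonzero sum.\<close>

lemma exists_square_roots_with_nonzero_cube_sum:
  fixes s c :: "nat \<Rightarrow> 'k::field"
  assumes closed: "alg_closed_field TYPE('k)" and two: "(2::'k) \<noteq> 0"
    and "finite S" "k1 \<in> S" "s k1 \<noteq> 0" "c k1 \<noteq> 0"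
  shows "\<exists>t. (\<forall>k. t k * t k = s k) \<and> (\<Sum>k\<in>S. t k * t k * t k * c k) \<noteq> 0"
proof -
  have "\<forall>k. \<exists>b. b ^ 2 = s k"
    using alg_closed_field_nth_root[OF closed] by simp
  then obtain \<tau> where \<tau>: "\<And>k. \<tau> k * \<tau> k = s k"
    by (metis power2_eq_square)
  define A where "A = (\<Sum>k\<in>S - {k1}. \<tau> k * \<tau> k * \<tau> k * c k)"
  define X where "X = \<tau> k1 * \<tau> k1 * \<tau> k1 * c k1"
  have X: "X \<noteq> 0" using \<tau>[of k1] assms(5,6) unfolding X_def by auto
  have sum: "(\<Sum>k\<in>S. t k * t k * t k * c k) = t k1 * t k1 * t k1 * c k1 + A"
    if "\<And>k. k \<noteq> k1 \<Longrightarrow> t k = \<tau> k" for t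
    using assms(3,4) that unfolding A_def by (simp add: sum.remove)
  show ?thesis
  proof (cases "X + A = 0")
    case False
    then show ?thesis using \<tau> sum[of \<tau>] unfolding X_def by metis
  next
    case True
    have "- X + A \<noteq> 0"
    proof
      assume "- X + A = 0"
      with True have "2 * X = 0" by (simp add: algebra_simps)
      with X two show False by simp
    qed
    then show ?thesis
      using \<tau> sum[of "\<tau>(k1 := - \<tau> k1)"] unfolding X_def
      by (intro exI[of _ "\<tau>(k1 := - \<tau> k1)"]) auto
  qed
qed

lemma exists_unit_cube_in_common_kernel:
  fixes f :: "('i,'k::field) series" and v :: "nat \<Rightarrow> 'i \<Rightarrow> 'k" and r :: nat
  assumes closed: "alg_closed_field TYPE('k)" and two: "(2::'k) \<noteq> 0" and three: "(3::'k) \<noteq> 0"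
    and f: "homog 3 f" "\<not> finite_strength 3 f"
    and \<Phi>: "\<forall>\<phi>\<in>set \<Phi>. linear_functional \<phi>"
    and K: "\<forall>z\<in>common_kernel \<Phi>. finite_strength 2 (dderiv z f)"
    and v: "\<forall>j<r. inV (v j)"
  shows "\<exists>x\<in>common_kernel \<Phi>. trilin f x x x = 1 \<and> (\<forall>j<r. trilin f x x (v j) = 0)"
proof -
  let ?S = "{..<Suc r}"
  obtain Z where Z: "\<forall>k\<in>?S. Z k \<in> common_kernel \<Phi> \<and> trilin f (Z k) (Z k) (Z k) \<noteq> 0"
    and orth: "trilin_orthogonal f Z ?S"
    using exists_trilin_orthogonal_family[OF two three f \<Phi> K, of "Suc r"] by auto
  have inV_Z: "\<forall>k\<in>?S. inV (Z k)" using Z by (simp add: common_kernel_def)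
  obtain s where s: "\<exists>k\<in>?S. s k \<noteq> 0" "\<forall>j<r. (\<Sum>k\<in>?S. s k * trilin f (Z k) (Z k) (v j)) = 0"
    using homogeneous_system_nontrivial_solution[of ?S r "\<lambda>k j. trilin f (Z k) (Z k) (v j)"] by auto
  then obtain k1 where k1: "k1 \<in> ?S" "s k1 \<noteq> 0" by blast
  have c1: "trilin f (Z k1) (Z k1) (Z k1) \<noteq> 0" using Z k1(1) by blast
  obtain t where t: "\<And>k. t k * t k = s k"
    and cube: "(\<Sum>k\<in>?S. t k * t k * t k * trilin f (Z k) (Z k) (Z k)) \<noteq> 0"
    using exists_square_roots_with_nonzero_cube_sum[where s = s and c = "\<lambda>k. trilin f (Z k) (Z k) (Z k)",
        OF closed two finite_lessThan k1 c1] by blast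
  define x0 where "x0 = (\<lambda>i. \<Sum>k\<in>?S. t k * Z k i)"
  have x0: "x0 \<in> common_kernel \<Phi>"
    unfolding x0_def using Z by (intro common_kernel_lincomb[OF \<Phi>]) auto
  have x0_cube: "trilin f x0 x0 x0 \<noteq> 0"
    unfolding x0_def trilin_orthogonal_lincomb_cube[OF finite_lessThan inV_Z orth] by (rule cube)
  have x0_v: "trilin f x0 x0 (v j) = 0" if "j < r" for j
    unfolding x0_def trilin_orthogonal_lincomb_square[OF finite_lessThan inV_Z orth v[rule_format, OF that]]
    using s(2) that by (simp add: t)
  obtain c where c: "c ^ 3 = inverse (trilin f x0 x0 x0)"
    using alg_closed_field_nth_root[OF closed, of 3] by auto
  have "inV x0" using x0 by (simp add: common_kernel_def)
  then show ?thesis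
    using x0_cube x0_v c
    by (intro bexI[of _ "\<lambda>i. c * x0 i"] conjI allI impI common_kernel_scale[OF \<Phi> x0])
      (simp_all add: trilin_scale1 trilin_scale2 trilin_scale3 inV_scale power3_eq_cube mult.assoc[symmetric])
qed

lemma set_table_entries:
  "set (table_entries v r n w u m) = v ` {..<r} \<union> {w i j | i j. i < r \<and> j < n i} \<union> u ` {..<m}"
  unfolding table_entries_def by auto

lemma table_entries_snoc:
  "table_entries v r n w (u(m := x)) (Suc m) = table_entries v r n w u m @ [x]"
proof -
  have "map (u(m := x)) [0..<m] = map u [0..<m]" by simp
  then show ?thesis unfolding table_entries_def by simp
qed

lemma lin_indep_list_snoc:
  fixes es :: "('i \<Rightarrow> 'k::field) list"
  assumes "lin_indep_list es" and "\<forall>c. x \<noteq> (\<lambda>i. \<Sum>k<length es. c k * (es ! k) i)"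
  shows "lin_indep_list (es @ [x])"
  unfolding lin_indep_list_def
proof (rule allI, rule impI)
  fix c :: "nat \<Rightarrow> 'k"
  let ?L = "length es"
  assume "\<forall>i. (\<Sum>k<length (es @ [x]). c k * ((es @ [x]) ! k) i) = 0"
  then have c: "(\<Sum>k<?L. c k * (es ! k) i) + c ?L * x i = 0" for i
    by (simp add: nth_append)
  have "c ?L = 0"
  proof (rule ccontr)
    assume "c ?L \<noteq> 0"
    then have "x = (\<lambda>i. \<Sum>k<?L. (- c k / c ?L) * (es ! k) i)"
      using c by (auto simp: field_simps sum_divide_distrib[symmetric] sum_negf eq_neg_iff_add_eq_0 add.commute)
    with assms(2)[rule_format, of "\<lambda>k. - c k / c ?L"] show False by simp
  qed
  then have "\<forall>k<?L. c k = 0"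
    using c assms(1) unfolding lin_indep_list_def by simp
  with \<open>c ?L = 0\<close> show "\<forall>k<length (es @ [x]). c k = 0"
    by (simp add: less_Suc_eq)
qed

lemma trilin_lincomb_vanishing:
  assumes "\<forall>e\<in>set es. inV e" "inV x" "\<forall>e\<in>set es. trilin f x x e = 0"
  shows "trilin f (\<lambda>i. \<Sum>k<length es. c k * (es ! k) i) x x = 0"
proof -
  have "trilin f (es ! k) x x = 0" if "k < length es" for k
    using assms that trilin_swap12[of "es ! k" x f x] trilin_swap23[of x "es ! k" f x]
    by (metis nth_mem)
  moreover have "trilin f (\<lambda>i. \<Sum>k<length es. c k * (es ! k) i) x x
      = (\<Sum>k<length es. c k * trilin f (es ! k) x x)"
    using assms(1) by (intro trilin_sum1) auto
  ultimately show ?thesis by simp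
qed

lemma trilin_eq_0_if_mixed:
  assumes inV: "\<forall>a\<in>E. inV a" "inV x"
    and orth: "\<forall>a\<in>E. \<forall>b\<in>E. trilin f x a b = 0" "\<forall>a\<in>E. trilin f x x a = 0"
    and abc: "a \<in> insert x E" "b \<in> insert x E" "c \<in> insert x E"
    and "x \<in> {a, b, c}" "\<not> (a = x \<and> b = x \<and> c = x)"
  shows "trilin f a b c = 0"
proof -
  have x_E: "trilin f x a b = 0" if "a \<in> insert x E" "b \<in> insert x E" "a \<in> E \<or> b \<in> E" for a b
    using that orth inV trilin_swap23[of a b f x] by auto
  have inV_abc: "inV a" "inV b" "inV c" using abc inV by auto
  consider "a = x" | "a \<noteq> x" "b = x" | "a \<noteq> x" "b \<noteq> x" "c = x"
    using \<open>x \<in> {a, b, c}\<close> by blast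
  then show ?thesis
  proof cases
    case 1 then show ?thesis using assms x_E by auto
  next
    case 2 then show ?thesis using assms x_E trilin_swap12[OF inV_abc(1,2)] by auto
  next
    case 3 then show ?thesis
      using assms x_E trilin_swap12[OF inV_abc(1) inV(2)] trilin_swap23[OF inV_abc(2,3)] by auto
  qed
qed

lemma good_table_nonzero_snoc:
  fixes f :: "('i,'k::field) series" and v :: "nat \<Rightarrow> 'i \<Rightarrow> 'k" and r :: nat
    and n :: "nat \<Rightarrow> nat" and w :: "nat \<Rightarrow> nat \<Rightarrow> 'i \<Rightarrow> 'k" and u :: "nat \<Rightarrow> 'i \<Rightarrow> 'k" and m :: nat
  defines "E \<equiv> set (table_entries v r n w u m)"
  assumes table: "good_table f v r n w u m"
    and x: "inV x" and orth: "\<forall>a\<in>E. \<forall>b\<in>E. trilin f x a b = 0" "\<forall>a\<in>E. trilin f x x a = 0"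
    and abc: "a \<in> insert x E" "b \<in> insert x E" "c \<in> insert x E" and nz: "trilin f a b c \<noteq> 0"
  shows "(\<exists>i<r. \<exists>j<n i. perm3_of a b c (v i) (w i j))
      \<or> (\<exists>j<Suc m. a = (u(m := x)) j \<and> b = (u(m := x)) j \<and> c = (u(m := x)) j)
      \<or> (a \<in> v ` {..<r} \<and> b \<in> v ` {..<r} \<and> c \<in> v ` {..<r})"
proof (cases "a = x \<and> b = x \<and> c = x")
  case True
  then show ?thesis by (intro disjI2 disjI1 exI[of _ m]) simp
next
  case False
  have "\<forall>a\<in>E. inV a"
    using table unfolding good_table_def Let_def E_def by blast
  then have "x \<notin> {a, b, c}" using trilin_eq_0_if_mixed[OF _ x orth abc] False nz by blast
  then have "a \<in> E" "b \<in> E" "c \<in> E" using abc by auto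
  then have "(\<exists>i<r. \<exists>j<n i. perm3_of a b c (v i) (w i j))
    \<or> (\<exists>j<m. a = u j \<and> b = u j \<and> c = u j)
    \<or> (a \<in> v ` {..<r} \<and> b \<in> v ` {..<r} \<and> c \<in> v ` {..<r})"
    using table nz unfolding good_table_def Let_def E_def by blast
  then show ?thesis
  proof (elim disjE)
    assume "\<exists>j<m. a = u j \<and> b = u j \<and> c = u j"
    then obtain j where "j < m" "a = u j" "b = u j" "c = u j" by blast
    then show ?thesis by (intro disjI2 disjI1 exI[of _ j]) simp
  qed blast+
qed

lemma good_table_snoc:
  fixes f :: "('i,'k::field) series" and v :: "nat \<Rightarrow> 'i \<Rightarrow> 'k" and r :: nat
    and n :: "nat \<Rightarrow> nat" and w :: "nat \<Rightarrow> nat \<Rightarrow> 'i \<Rightarrow> 'k" and u :: "nat \<Rightarrow> 'i \<Rightarrow> 'k" and m :: nat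
  defines "E \<equiv> set (table_entries v r n w u m)"
  assumes table: "good_table f v r n w u m"
    and x: "inV x" "trilin f x x x = 1" "finite_strength 2 (dderiv x f)"
    and orth: "\<forall>a\<in>E. \<forall>b\<in>E. trilin f x a b = 0" "\<forall>a\<in>E. trilin f x x a = 0"
  shows "good_table f v r n w (u(m := x)) (Suc m)"
proof -
  have inV_E: "\<forall>a\<in>E. inV a"
    using table unfolding good_table_def Let_def E_def by blast
  have "lin_indep_list (table_entries v r n w u m @ [x])"
  proof (rule lin_indep_list_snoc)
    show "lin_indep_list (table_entries v r n w u m)"
      using table unfolding good_table_def Let_def by blast
    show "\<forall>c. x \<noteq> (\<lambda>i. \<Sum>k<length (table_entries v r n w u m). c k * (table_entries v r n w u m ! k) i)"
      using trilin_lincomb_vanishing[of _ x f] inV_E orth(2) x(1,2) unfolding E_def by force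
  qed
  moreover have "set (table_entries v r n w u m @ [x]) = insert x E"
    unfolding E_def by simp
  ultimately show ?thesis
    using table x inV_E good_table_nonzero_snoc[OF table x(1) orth[unfolded E_def]]
    unfolding good_table_def Let_def table_entries_snoc
    by (simp add: less_Suc_eq)
qed

lemma good_table_extension_functionals:
  fixes f :: "('i,'k::field) series" and v :: "nat \<Rightarrow> 'i \<Rightarrow> 'k" and r :: nat
    and n :: "nat \<Rightarrow> nat" and w :: "nat \<Rightarrow> nat \<Rightarrow> 'i \<Rightarrow> 'k" and u :: "nat \<Rightarrow> 'i \<Rightarrow> 'k" and m :: nat
  defines "E \<equiv> set (table_entries v r n w u m)"
  assumes basis: "residual_basis f v r" and table: "good_table f v r n w u m"
  shows "\<exists>\<Phi>. (\<forall>\<phi>\<in>set \<Phi>. linear_functional \<phi>)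
    \<and> (\<forall>z\<in>common_kernel \<Phi>. finite_strength 2 (dderiv z f)
        \<and> (\<forall>a\<in>E. \<forall>b\<in>E. trilin f z a b = 0)
        \<and> (\<forall>a\<in>E - v ` {..<r}. trilin f z z a = 0))"
proof -
  have inV_E: "\<forall>a\<in>E. inV a"
    using table unfolding good_table_def Let_def E_def by blast
  have "\<forall>a\<in>E - v ` {..<r}. finite_strength 2 (dderiv a f)"
    using table unfolding good_table_def Let_def E_def set_table_entries by auto
  then obtain \<Psi> where \<Psi>: "\<forall>\<psi>\<in>set \<Psi>. linear_functional \<psi>"
    and \<Psi>_E: "\<forall>z\<in>common_kernel \<Psi>. \<forall>a\<in>E - v ` {..<r}. \<forall>y. inV y \<longrightarrow> trilin f a z y = 0"
    using kernel_functionals_of_finite_strength_derivatives[of "filter (\<lambda>a. a \<notin> v ` {..<r}) (table_entries v r n w u m)" f]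
      inV_E unfolding E_def by auto
  define \<Phi> where "\<Phi> = map (\<lambda>j x. residual_coords f v r x j) [0..<r]
    @ map (\<lambda>(a, b) x. trilin f x a b) (List.product (table_entries v r n w u m) (table_entries v r n w u m)) @ \<Psi>"
  have "\<forall>\<phi>\<in>set \<Phi>. linear_functional \<phi>"
    unfolding \<Phi>_def using \<Psi> linear_functional_residual_coord[OF basis] linear_functional_trilin by auto
  moreover have "finite_strength 2 (dderiv z f)" "\<forall>a\<in>E. \<forall>b\<in>E. trilin f z a b = 0"
    "\<forall>a\<in>E - v ` {..<r}. trilin f z z a = 0" if "z \<in> common_kernel \<Phi>" for z
  proof -
    have z: "inV z" "\<forall>j<r. residual_coords f v r z j = 0" "z \<in> common_kernel \<Psi>"
      and "\<forall>a\<in>E. \<forall>b\<in>E. trilin f z a b = 0"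
      using that unfolding \<Phi>_def E_def common_kernel_def by auto
    then show "finite_strength 2 (dderiv z f)" "\<forall>a\<in>E. \<forall>b\<in>E. trilin f z a b = 0"
      using finite_strength_if_residual_coords_eq_0[OF basis] by auto
    show "\<forall>a\<in>E - v ` {..<r}. trilin f z z a = 0"
      using \<Psi>_E z inV_E trilin_swap12[of _ z f z] trilin_swap23[of z _ f z] by fastforce
  qed
  ultimately show ?thesis by blast
qed

theorem lemma5p5:
  fixes f :: "('i, 'k::field) series"
    and v :: "nat \<Rightarrow> 'i \<Rightarrow> 'k" and r :: nat
    and n :: "nat \<Rightarrow> nat" and w :: "nat \<Rightarrow> nat \<Rightarrow> 'i \<Rightarrow> 'k"
    and u :: "nat \<Rightarrow> 'i \<Rightarrow> 'k" and m :: nat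
  assumes "alg_closed_field TYPE('k)"
    and "(2::'k) \<noteq> 0" and "(3::'k) \<noteq> 0"
    and "homog 3 f"
    and "\<not> finite_strength 3 f"
    and "\<forall>j<r. inV (v j)"
    and "\<forall>c. finite_strength 2 (\<lambda>M. \<Sum>j<r. c j * dderiv (v j) f M) \<longrightarrow> (\<forall>j<r. c j = 0)"
    and "\<forall>x. inV x \<longrightarrow>
           (\<exists>c. finite_strength 2 (\<lambda>M. dderiv x f M - (\<Sum>j<r. c j * dderiv (v j) f M)))"
    and "good_table f v r n w u m"
  shows "\<exists>x. good_table f v r n w (u(m := x)) (Suc m)"
proof -
  let ?E = "set (table_entries v r n w u m)"
  have "residual_basis f v r"
    using assms(7,8) unfolding residual_basis_def by blast
  then obtain \<Phi> where \<Phi>: "\<forall>\<phi>\<in>set \<Phi>. linear_functional \<phi>"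
    and kernel: "\<forall>z\<in>common_kernel \<Phi>. finite_strength 2 (dderiv z f)
        \<and> (\<forall>a\<in>?E. \<forall>b\<in>?E. trilin f z a b = 0) \<and> (\<forall>a\<in>?E - v ` {..<r}. trilin f z z a = 0)"
    using good_table_extension_functionals[OF _ assms(9)] by blast
  obtain x where x: "x \<in> common_kernel \<Phi>" "trilin f x x x = 1" "\<forall>j<r. trilin f x x (v j) = 0"
    using exists_unit_cube_in_common_kernel[OF assms(1-5) \<Phi> _ assms(6)] kernel by blast
  then have "\<forall>a\<in>?E. trilin f x x a = 0"
    using kernel by blast
  moreover have "inV x"
    using x(1) by (simp add: common_kernel_def)
  ultimately show ?thesis
    using x kernel by (intro exI[of _ x] good_table_snoc[OF assms(9)]) auto
qed

end
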